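(* Let $\lambda$ be a Young diagram with $\ell$ corners (removable boxes) $c_1,\dots,c_\ell$ and with addable boxes $s_0,s_1,\dots,s_\ell$. Set $X_i = x\,t\,\mathrm{wt}(c_i)$ for $1\le i\le \ell$ and $U_k=\mathrm{wt}(s_k)$ for $0\le k\le\ell$. Then \[ \sum_{k=0}^{\ell} \frac{1}{U_k^{\,j}}\, \frac{1}{\displaystyle \prod_{\substack{i=0\\ i\neq k}}^{\ell} \Bigl(1 - \frac{U_i}{U_k}\Bigr)} = \begin{cases} 1,&j=0,\\ 0,&1\leq j\leq \ell,\\ \dfrac{(-1)^\ell}{X_1\cdots X_{\ell}}, &j=\ell+1. \end{cases} \]
   Context: Here $x$ and $t$ are two variables (indeterminates). For a box $b$ of (or addable to) a Young diagram, its weight is $\mathrm{wt}(b)=x^{l'(b)}t^{a'(b)}$, where $l'(b)$ is the coleg and $a'(b)$ the coarm of $b$; i.e., for a box in row $r$ and column $c$ (rows and columns numbered from $1$, English convention with the first row on top), $l'(b)=r-1$ and $a'(b)=c-1$. A Young diagram with $\ell$ corners has exactly $\ell+1$ addable boxes. *)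

theory Defs
  imports Main
begin

text \<open>Boxes are pairs (row, column), numbered from 1, English convention.\<close>

definition young :: "nat list \<Rightarrow> bool" where
  "young lam \<longleftrightarrow> sorted_wrt (\<ge>) lam \<and> 0 \<notin> set lam"

definition boxes :: "nat list \<Rightarrow> (nat \<times> nat) set" where
  "boxes lam = {(r, c). 1 \<le> r \<and> r \<le> length lam \<and> 1 \<le> c \<and> c \<le> lam ! (r - 1)}"

definition corners :: "nat list \<Rightarrow> (nat \<times> nat) set" where
  "corners lam = {(r, c). (r, c) \<in> boxes lam \<and> (r + 1, c) \<notin> boxes lam \<and> (r, c + 1) \<notin> boxes lam}"

definition addable :: "nat list \<Rightarrow> (nat \<times> nat) set" where
  "addable lam = {(r, c). 1 \<le> r \<and> 1 \<le> c \<and> (r, c) \<notin> boxes lam \<and>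
       (r = 1 \<or> (r - 1, c) \<in> boxes lam) \<and> (c = 1 \<or> (r, c - 1) \<in> boxes lam)}"

text \<open>Weight wt(b) = x^(coleg) t^(coarm) = x^(r-1) t^(c-1).\<close>
definition wt :: "'a::field \<Rightarrow> 'a \<Rightarrow> nat \<times> nat \<Rightarrow> 'a" where
  "wt x t b = x ^ (fst b - 1) * t ^ (snd b - 1)"

end

(* Let U be the set of the l + 1 addable weights (distinct by hypothesis, nonzero since x, t are).
   The summand for v \<in> U equals v^(l-j) / \<Prod>(v - w) over the other w \<in> U, so the sum is the
   divided difference of v \<mapsto> v^(l-j) on the nodes U, i.e. the leading coefficient of its
   interpolating polynomial of degree \<le> l.  For 0 \<le> j \<le> l that polynomial is v^(l-j) itself,
   giving [j = 0]; for j = l + 1 the divided difference of 1/v is (-1)^l / \<Prod>U.  Peeling off the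
   first row of the diagram shows both that there are l + 1 addable boxes and that \<Prod>U equals
   the product of x t wt(c) over the corners c. *)

theory Submission
  imports Defs
begin

definition divdiff :: "'a::field set \<Rightarrow> ('a \<Rightarrow> 'a) \<Rightarrow> 'a" where
  "divdiff S f = (\<Sum>a\<in>S. f a / (\<Prod>b\<in>S - {a}. a - b))"

lemma divdiff_cong: "(\<And>a. a \<in> S \<Longrightarrow> f a = g a) \<Longrightarrow> divdiff S f = divdiff S g"
  unfolding divdiff_def by (rule sum.cong) auto

lemma divdiff_add: "divdiff S (\<lambda>a. f a + g a) = divdiff S f + divdiff S g"
  unfolding divdiff_def by (simp add: add_divide_distrib sum.distrib)

lemma divdiff_cmult: "divdiff S (\<lambda>a. k * f a) = k * divdiff S f"
  unfolding divdiff_def by (simp add: sum_distrib_left mult.assoc)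

lemma divdiff_singleton [simp]: "divdiff {a} f = f a"
  unfolding divdiff_def by simp

lemma divdiff_mult_sub_node:
  assumes "finite S" "c \<in> S"
  shows "divdiff S (\<lambda>a. f a * (a - c)) = divdiff (S - {c}) f"
proof -
  have "f a * (a - c) / (\<Prod>b\<in>S - {a}. a - b) = f a / (\<Prod>b\<in>S - {c} - {a}. a - b)"
    if a: "a \<in> S - {c}" for a
  proof -
    have "(\<Prod>b\<in>S - {a}. a - b) = (a - c) * (\<Prod>b\<in>S - {a} - {c}. a - b)"
      using a assms by (subst prod.remove[of _ c]) auto
    moreover have "S - {a} - {c} = S - {c} - {a}" by auto
    ultimately show ?thesis using a by simp
  qed
  moreover have "divdiff S (\<lambda>a. f a * (a - c))
      = (\<Sum>a\<in>S - {c}. f a * (a - c) / (\<Prod>b\<in>S - {a}. a - b))"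
    unfolding divdiff_def using assms by (simp add: sum.remove)
  ultimately show ?thesis
    unfolding divdiff_def by simp
qed

lemma divdiff_mult_id:
  assumes "finite S" "c \<in> S"
  shows "divdiff S (\<lambda>a. a * f a) = divdiff (S - {c}) f + c * divdiff S f"
proof -
  have "divdiff S (\<lambda>a. a * f a) = divdiff S (\<lambda>a. f a * (a - c) + c * f a)"
    by (rule divdiff_cong) (simp add: algebra_simps)
  then show ?thesis
    by (simp add: divdiff_add divdiff_cmult divdiff_mult_sub_node[OF assms])
qed

lemma divdiff_one:
  assumes "finite S" "card S = Suc k"
  shows "divdiff S (\<lambda>_. 1) = (if k = 0 then 1 else 0)"
  using assms
proof (induction k arbitrary: S)
  case 0
  then show ?case by (auto simp: card_Suc_eq)
next
  case (Suc k)
  then obtain c d where cd: "c \<in> S" "d \<in> S" "c \<noteq> d"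
    by (auto simp: card_Suc_eq)
  \<comment> \<open>Deleting either of two nodes gives the same value, which forces \<open>(c - d) * divdiff S 1 = 0\<close>.\<close>
  have "divdiff (S - {c}) (\<lambda>_. 1) = divdiff (S - {d}) (\<lambda>_. 1)"
    using Suc cd by simp
  moreover have "divdiff S (\<lambda>a. a * 1) = divdiff (S - {e}) (\<lambda>_. 1) + e * divdiff S (\<lambda>_. 1)"
    if "e \<in> S" for e
    using divdiff_mult_id[OF Suc.prems(1) that, of "\<lambda>_. 1"] by simp
  ultimately have "c * divdiff S (\<lambda>_. 1) = d * divdiff S (\<lambda>_. 1)"
    using cd by (metis add.commute add_left_cancel)
  then show ?case using cd by simp
qed

lemma divdiff_power:
  assumes "finite S" "card S = Suc k" "m \<le> k"
  shows "divdiff S (\<lambda>a. a ^ m) = (if m = k then 1 else 0)"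
  using assms
proof (induction m arbitrary: S k)
  case 0
  then show ?case using divdiff_one[of S k] by simp
next
  case (Suc m)
  then obtain k' where k: "k = Suc k'" by (cases k) auto
  obtain c where c: "c \<in> S" using Suc.prems by fastforce
  have "divdiff S (\<lambda>a. a ^ Suc m) = divdiff (S - {c}) (\<lambda>a. a ^ m) + c * divdiff S (\<lambda>a. a ^ m)"
    using divdiff_mult_id[OF Suc.prems(1) c] by simp
  also have "\<dots> = (if m = k' then 1 else 0)"
    using Suc c k by simp
  finally show ?case using k by simp
qed

lemma divdiff_inverse:
  assumes "finite S" "card S = Suc k" "0 \<notin> S"
  shows "divdiff S inverse = (-1) ^ k / \<Prod> S"
  using assms
proof (induction k arbitrary: S)
  case 0
  then show ?case by (auto simp: card_Suc_eq divide_inverse)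
next
  case (Suc k)
  obtain c where c: "c \<in> S" using Suc.prems by fastforce
  have "divdiff S (\<lambda>_. 1) = divdiff S (\<lambda>a. a * inverse a)"
    using Suc.prems(3) by (intro divdiff_cong) (metis right_inverse)
  also have "\<dots> = divdiff (S - {c}) inverse + c * divdiff S inverse"
    by (rule divdiff_mult_id[OF Suc.prems(1) c])
  finally have c_times: "c * divdiff S inverse = - ((-1) ^ k / \<Prod> (S - {c}))"
    using Suc c divdiff_one[OF Suc.prems(1,2)] by (simp add: eq_neg_iff_add_eq_0 add.commute)
  have "c \<noteq> 0" using Suc.prems(3) c by auto
  then have "divdiff S inverse = c * divdiff S inverse / c" by simp
  also have "\<dots> = (-1) ^ Suc k / (c * \<Prod> (S - {c}))"
    unfolding c_times by (simp add: divide_divide_eq_left mult.commute)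
  finally show ?case
    using Suc.prems(1) c by (simp add: prod.remove)
qed

lemma partial_fraction_inverse_powers:
  fixes U :: "'a::field set"
  assumes "finite U" "card U = Suc l" "0 \<notin> U" "j \<le> Suc l"
  shows "(\<Sum>v\<in>U. (1 / v ^ j) * (1 / (\<Prod>w\<in>U - {v}. 1 - w / v)))
         = (if j = 0 then 1 else if j \<le> l then 0 else (-1) ^ l / \<Prod> U)"
proof -
  have summand: "(1 / v ^ j) * (1 / (\<Prod>w\<in>U - {v}. 1 - w / v)) = v ^ l / v ^ j / (\<Prod>w\<in>U - {v}. v - w)"
    if v: "v \<in> U" for v
  proof -
    have "v \<noteq> 0" "card (U - {v}) = l" using v assms by auto
    then have "(\<Prod>w\<in>U - {v}. 1 - w / v) = (\<Prod>w\<in>U - {v}. (v - w) / v)"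
      by (intro prod.cong) (simp_all add: diff_divide_distrib)
    also have "\<dots> = (\<Prod>w\<in>U - {v}. v - w) / v ^ l"
      using \<open>card (U - {v}) = l\<close> by (simp add: prod_dividef)
    finally show ?thesis by simp
  qed
  have "(\<Sum>v\<in>U. (1 / v ^ j) * (1 / (\<Prod>w\<in>U - {v}. 1 - w / v))) = divdiff U (\<lambda>v. v ^ l / v ^ j)"
    unfolding divdiff_def by (intro sum.cong refl summand)
  also have "\<dots> = (if j = 0 then 1 else if j \<le> l then 0 else (-1) ^ l / \<Prod> U)"
  proof (cases "j \<le> l")
    case True
    then have "divdiff U (\<lambda>v. v ^ l / v ^ j) = divdiff U (\<lambda>v. v ^ (l - j))"
      using assms(3) by (intro divdiff_cong) (metis power_diff)
    then show ?thesis using True divdiff_power[OF assms(1,2), of "l - j"] by auto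
  next
    case False
    with assms(4) have "j = Suc l" by simp
    then have "divdiff U (\<lambda>v. v ^ l / v ^ j) = divdiff U inverse"
      using assms(3) by (intro divdiff_cong) (auto simp: field_simps)
    then show ?thesis using False divdiff_inverse[OF assms(1-3)] by simp
  qed
  finally show ?thesis .
qed

definition first_row :: "nat list \<Rightarrow> nat" where
  "first_row lam = (case lam of [] \<Rightarrow> 0 | a # _ \<Rightarrow> a)"

lemma finite_boxes: "finite (boxes lam)"
proof (rule finite_subset)
  have "lam ! (r - 1) \<le> sum_list lam" if "1 \<le> r" "r \<le> length lam" for r
    using that by (intro elem_le_sum_list) simp
  then show "boxes lam \<subseteq> {1..length lam} \<times> {1..sum_list lam}"
    by (force simp: boxes_def)
qed simp

lemma finite_corners: "finite (corners lam)"
  by (rule finite_subset[OF _ finite_boxes]) (auto simp: corners_def)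

lemma finite_addable: "finite (addable lam)"
proof (rule finite_subset)
  show "addable lam \<subseteq> insert (1, 1) (apfst Suc ` boxes lam \<union> apsnd Suc ` boxes lam)"
  proof
    fix s assume "s \<in> addable lam"
    then obtain r c where s: "s = (r, c)" "r \<ge> 1" "c \<ge> 1" "r = 1 \<or> (r - 1, c) \<in> boxes lam"
      "c = 1 \<or> (r, c - 1) \<in> boxes lam"
      by (auto simp: addable_def)
    show "s \<in> insert (1, 1) (apfst Suc ` boxes lam \<union> apsnd Suc ` boxes lam)"
    proof (cases "r = 1")
      case False
      with s have "s = apfst Suc (r - 1, c)" "(r - 1, c) \<in> boxes lam" by auto
      then show ?thesis by blast
    next
      case True
      with s have "s = (1, 1) \<or> s = apsnd Suc (r, c - 1) \<and> (r, c - 1) \<in> boxes lam" by auto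
      then show ?thesis by blast
    qed
  qed
qed (simp add: finite_boxes)

lemma boxes_Cons_iff:
  "(r, c) \<in> boxes (a # rest) \<longleftrightarrow>
     1 \<le> r \<and> 1 \<le> c \<and> (r = 1 \<longrightarrow> c \<le> a) \<and> (r \<noteq> 1 \<longrightarrow> (r - 1, c) \<in> boxes rest)"
  unfolding boxes_def by (cases r; cases "r - 1") auto

lemma boxes_first_row_iff: "(Suc 0, c) \<in> boxes lam \<longleftrightarrow> 1 \<le> c \<and> c \<le> first_row lam"
  by (cases lam) (auto simp: boxes_def first_row_def)

lemma addable_Cons_iff:
  "(r, c) \<in> addable (a # rest) \<longleftrightarrow>
     (r = 1 \<and> c = Suc a) \<or> (r \<ge> 2 \<and> (r - 1, c) \<in> addable rest \<and> (r = 2 \<longrightarrow> c \<le> a))"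
  unfolding addable_def
  by (cases r; cases "r - 1"; cases c) (auto simp: boxes_Cons_iff)

lemma corners_Cons_iff:
  "(r, c) \<in> corners (a # rest) \<longleftrightarrow>
     (r = 1 \<and> c = a \<and> first_row rest < a) \<or> (r \<ge> 2 \<and> (r - 1, c) \<in> corners rest)"
  unfolding corners_def
  by (cases r; cases "r - 1") (auto simp: boxes_Cons_iff boxes_first_row_iff, auto simp: boxes_def)

lemma boxes_Nil: "boxes [] = {}"
  by (simp add: boxes_def)

lemma addable_Nil: "addable [] = {(1, 1)}"
  by (auto simp: addable_def boxes_Nil)

lemma corners_Nil: "corners [] = {}"
  by (simp add: corners_def boxes_Nil)

lemma mem_apfst_Suc_image_iff: "(r, c) \<in> apfst Suc ` B \<longleftrightarrow> (\<exists>r'. r = Suc r' \<and> (r', c) \<in> B)"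
  by (force simp: image_iff)

lemma addable_first_row_iff: "(Suc 0, c) \<in> addable lam \<longleftrightarrow> c = Suc (first_row lam)"
  unfolding addable_def by (cases c) (auto simp: boxes_first_row_iff)

lemma fst_addable: "s \<in> addable lam \<Longrightarrow> 1 \<le> fst s"
  by (auto simp: addable_def)

lemma fst_corners: "s \<in> corners lam \<Longrightarrow> 1 \<le> fst s"
  by (auto simp: corners_def boxes_def)

text \<open>The box \<open>(1, Suc a)\<close> is addable to \<open>rest\<close> exactly when the first two rows are equal;
  it is then no longer addable in the second row of \<open>a # rest\<close>.\<close>

lemma addable_Cons:
  assumes "first_row rest \<le> a"
  shows "addable (a # rest) = insert (1, Suc a) (apfst Suc ` (addable rest - {(1, Suc a)}))"
proof (rule set_eqI)
  fix s :: "nat \<times> nat"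
  obtain r c where s: "s = (r, c)" by fastforce
  have "(r, c) \<in> addable (a # rest) \<longleftrightarrow>
      (r, c) = (1, Suc a) \<or> (\<exists>r'. r = Suc r' \<and> (r', c) \<in> addable rest - {(1, Suc a)})"
    using assms fst_addable[of "(r - 1, c)" rest]
    by (cases r; cases "r - 1") (auto simp: addable_Cons_iff addable_first_row_iff)
  then show "s \<in> addable (a # rest) \<longleftrightarrow> s \<in> insert (1, Suc a) (apfst Suc ` (addable rest - {(1, Suc a)}))"
    by (simp add: s mem_apfst_Suc_image_iff)
qed

lemma corners_Cons:
  "corners (a # rest) = (if first_row rest < a then {(1, a)} else {}) \<union> apfst Suc ` corners rest"
proof (rule set_eqI)
  fix s :: "nat \<times> nat"
  obtain r c where s: "s = (r, c)" by fastforce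
  have "(r, c) \<in> corners (a # rest) \<longleftrightarrow>
      (r, c) = (1, a) \<and> first_row rest < a \<or> (\<exists>r'. r = Suc r' \<and> (r', c) \<in> corners rest)"
    using fst_corners[of "(r - 1, c)" rest]
    by (cases r; cases "r - 1") (auto simp: corners_Cons_iff)
  then show "s \<in> corners (a # rest) \<longleftrightarrow> s \<in> (if first_row rest < a then {(1, a)} else {}) \<union> apfst Suc ` corners rest"
    by (simp add: s mem_apfst_Suc_image_iff)
qed

lemma young_Cons: "young (a # rest) \<Longrightarrow> young rest \<and> first_row rest \<le> a \<and> 1 \<le> a"
  by (cases rest) (auto simp: young_def first_row_def)

lemma card_addable:
  assumes "young lam"
  shows "card (addable lam) = Suc (card (corners lam))"
  using assms
proof (induction lam)
  case Nil
  then show ?case by (simp add: addable_Nil corners_Nil)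
next
  case (Cons a rest)
  then have IH: "card (addable rest) = Suc (card (corners rest))" and le: "first_row rest \<le> a"
    using young_Cons by auto
  have card_shift: "card (apfst Suc ` B) = card B" for B :: "(nat \<times> nat) set"
    by (simp add: card_image inj_on_subset[of "apfst Suc" UNIV])
  have "(1, Suc a) \<notin> apfst Suc ` (addable rest - {(1, Suc a)})"
    using fst_addable by (force simp: mem_apfst_Suc_image_iff)
  then have "card (addable (a # rest)) = Suc (card (addable rest - {(1, Suc a)}))"
    unfolding addable_Cons[OF le] by (simp add: card_shift finite_addable)
  moreover have "(1, a) \<notin> apfst Suc ` corners rest"
    using fst_corners by (force simp: mem_apfst_Suc_image_iff)
  then have "card (corners (a # rest)) =
      (if first_row rest < a then Suc (card (corners rest)) else card (corners rest))"
    unfolding corners_Cons by (simp add: card_shift finite_corners)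
  ultimately show ?case
    using IH le by (auto simp: addable_first_row_iff card_Diff_singleton_if)
qed

lemma wt_apfst_Suc: "1 \<le> fst s \<Longrightarrow> wt x t (apfst Suc s) = x * wt x t s"
  by (cases s; cases "fst s") (auto simp: wt_def)

lemma prod_wt_apfst_Suc:
  assumes "finite B" "\<forall>s\<in>B. 1 \<le> fst s"
  shows "(\<Prod>s\<in>apfst Suc ` B. k * wt x t s) = x ^ card B * (\<Prod>s\<in>B. k * wt x t s)"
proof -
  have "(\<Prod>s\<in>apfst Suc ` B. k * wt x t s) = (\<Prod>s\<in>B. x * (k * wt x t s))"
    using assms by (subst prod.reindex) (auto simp: inj_on_def wt_apfst_Suc intro!: prod.cong)
  then show ?thesis by (simp add: prod.distrib)
qed

lemma prod_wt_addable:
  fixes x t :: "'a::field"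
  assumes "young lam"
  shows "(\<Prod>s\<in>addable lam. wt x t s) = (\<Prod>c\<in>corners lam. x * t * wt x t c)"
  using assms
proof (induction lam)
  case Nil
  then show ?case by (simp add: addable_Nil corners_Nil wt_def)
next
  case (Cons a rest)
  let ?A = "addable rest" and ?C = "corners rest" and ?q = "(1, Suc a)"
  have young: "young rest" and le: "first_row rest \<le> a" and pos: "1 \<le> a"
    using young_Cons[OF Cons.prems] by auto
  note IH = Cons.IH[OF young]
  have wt_q: "wt x t ?q = t ^ a" by (simp add: wt_def)
  have shift_C: "(\<Prod>c\<in>apfst Suc ` ?C. x * t * wt x t c) = x ^ card ?C * (\<Prod>c\<in>?C. x * t * wt x t c)"
    using prod_wt_apfst_Suc[of ?C "x * t"] fst_corners finite_corners by blast
  have "?q \<notin> apfst Suc ` (?A - {?q})"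
    using fst_addable by (force simp: mem_apfst_Suc_image_iff)
  then have "(\<Prod>s\<in>addable (a # rest). wt x t s) = t ^ a * (\<Prod>s\<in>apfst Suc ` (?A - {?q}). 1 * wt x t s)"
    unfolding addable_Cons[OF le] by (simp add: finite_addable wt_def)
  also have "\<dots> = t ^ a * x ^ card (?A - {?q}) * (\<Prod>s\<in>?A - {?q}. wt x t s)"
    using prod_wt_apfst_Suc[of "?A - {?q}" 1 x t] fst_addable finite_addable by force
  finally have addable_eq: "(\<Prod>s\<in>addable (a # rest). wt x t s)
      = t ^ a * x ^ card (?A - {?q}) * (\<Prod>s\<in>?A - {?q}. wt x t s)" .
  show ?case
  proof (cases "first_row rest < a")
    case True
    then have "?q \<notin> ?A" by (simp add: addable_first_row_iff)
    moreover have "(1, a) \<notin> apfst Suc ` ?C"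
      using fst_corners by (force simp: mem_apfst_Suc_image_iff)
    moreover have "t * wt x t (1, a) = t ^ a"
      using pos by (cases a) (simp_all add: wt_def)
    ultimately show ?thesis
      using True IH addable_eq shift_C card_addable[OF young]
      by (simp add: corners_Cons finite_corners algebra_simps)
  next
    case False
    with le have "?q \<in> ?A" by (simp add: addable_first_row_iff)
    then have "(\<Prod>s\<in>?A. wt x t s) = t ^ a * (\<Prod>s\<in>?A - {?q}. wt x t s)"
      and "card (?A - {?q}) = card ?C"
      using card_addable[OF young] finite_addable wt_q by (simp_all add: prod.remove)
    then show ?thesis
      using False IH addable_eq shift_C by (simp add: corners_Cons algebra_simps)
  qed
qed

theorem lemmaC0p1:
  fixes lam :: "nat list" and x t :: "'a::field" and j :: nat
  assumes "young lam"
    and "x \<noteq> 0" and "t \<noteq> 0"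
    and "inj_on (wt x t) (addable lam)"
    and "j \<le> card (corners lam) + 1"
  shows "(\<Sum>s\<in>addable lam. (1 / wt x t s ^ j) *
            (1 / (\<Prod>u\<in>addable lam - {s}. (1 - wt x t u / wt x t s))))
         = (if j = 0 then 1
            else if j \<le> card (corners lam) then 0
            else (- 1) ^ card (corners lam) / (\<Prod>c\<in>corners lam. x * t * wt x t c))"
proof -
  let ?A = "addable lam" and ?w = "wt x t"
  define U where "U = ?w ` ?A"
  have "0 \<notin> U" using assms(2,3) by (auto simp: U_def wt_def)
  moreover have "finite U" "card U = Suc (card (corners lam))"
    using finite_addable card_addable[OF assms(1)] assms(4) by (simp_all add: U_def card_image)
  moreover have "(\<Prod>u\<in>?A - {s}. 1 - ?w u / ?w s) = (\<Prod>w\<in>U - {?w s}. 1 - w / ?w s)" if "s \<in> ?A" for s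
  proof -
    have "U - {?w s} = ?w ` (?A - {s})" using that assms(4) by (auto simp: U_def inj_on_def)
    then show ?thesis using assms(4) by (simp add: prod.reindex inj_on_diff)
  qed
  then have "(\<Sum>s\<in>?A. (1 / ?w s ^ j) * (1 / (\<Prod>u\<in>?A - {s}. 1 - ?w u / ?w s)))
      = (\<Sum>v\<in>U. (1 / v ^ j) * (1 / (\<Prod>w\<in>U - {v}. 1 - w / v)))"
    using assms(4) by (simp add: U_def sum.reindex)
  moreover have "\<Prod> U = (\<Prod>c\<in>corners lam. x * t * ?w c)"
    using assms(4) prod_wt_addable[OF assms(1)] by (simp add: U_def prod.reindex)
  ultimately show ?thesis
    using partial_fraction_inverse_powers[of U "card (corners lam)" j] assms(5) by simp
qed

end
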